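(* Let $X$ be a locally convex space, let $T:X\rightrightarrows X^{*}$, and let $\mathcal{V}$ be a class of algebraically open subsets of $X$ with $X\in\mathcal{V}$. Then $T\in\mathcal{M}(X)$ and $T$ is identified by every $V\in\mathcal{V}$ if and only if $T$ is representable and $T$ is $V$-NI for every $V\in\mathcal{V}$.
   Context: $(X,\tau)$ is a non-trivial Hausdorff locally convex space, $X^*$ its dual with weak-star topology $\omega^*$, $Z=X\times X^*$ with topology $\tau\times\omega^*$, $c(x,x^* )=\langle x,x^*\rangle$. Operators are identified with their graphs; $D(T)$ is the domain; $T|_V$ has graph $\operatorname{Graph}T\cap(V\times X^* )$. $\varphi_{T}(x,x^{*})=\sup\{\langle x,u^{*}\rangle+\langle u,x^{*}\rangle-\langle u,u^{*}\rangle\mid(u,u^{*})\in T\}$ ($\sup\emptyset=-\infty$). $\mathcal M(X)$: monotone operators with non-empty graph. $T$ is representable if there is a proper convex $\tau\times\omega^*$-lsc $h:Z\to\overline{\mathbb R}$ with $h\ge c$ and $\{h=c\}=\operatorname{Graph}T$. $V$ identifies $T$ if $\{z\in V\times X^*\mid\varphi_{T|_V}(z)\le c(z)\}\subset\operatorname{Graph}T$; $T$ is $V$-NI if $\varphi_{T|_V}\ge c$ on $V\times X^*$. Algebraically open: equal to its core. *)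

theory Defs
  imports "HOL-Analysis.Analysis"
begin

definition hlcs :: "'a::real_vector topology \<Rightarrow> bool" where
  "hlcs \<tau> \<longleftrightarrow>
     topspace \<tau> = UNIV \<and>
     continuous_map (prod_topology \<tau> \<tau>) \<tau> (\<lambda>(x, y). x + y) \<and>
     continuous_map (prod_topology euclideanreal \<tau>) \<tau> (\<lambda>(a, x). a *\<^sub>R x) \<and>
     Hausdorff_space \<tau> \<and>
     (\<forall>U. openin \<tau> U \<and> 0 \<in> U \<longrightarrow> (\<exists>W. openin \<tau> W \<and> convex W \<and> 0 \<in> W \<and> W \<subseteq> U)) \<and>
     (\<exists>x::'a. x \<noteq> 0)"

definition dual :: "'a::real_vector topology \<Rightarrow> ('a \<Rightarrow> real) set" where
  "dual \<tau> = {f. linear f \<and> continuous_map \<tau> euclideanreal f}"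

definition weak_star :: "'a::real_vector topology \<Rightarrow> ('a \<Rightarrow> real) topology" where
  "weak_star \<tau> = subtopology (product_topology (\<lambda>_. euclideanreal) UNIV) (dual \<tau>)"

definition Ztop :: "'a::real_vector topology \<Rightarrow> ('a \<times> ('a \<Rightarrow> real)) topology" where
  "Ztop \<tau> = prod_topology \<tau> (weak_star \<tau>)"

definition Zset :: "'a::real_vector topology \<Rightarrow> ('a \<times> ('a \<Rightarrow> real)) set" where
  "Zset \<tau> = UNIV \<times> dual \<tau>"

definition cpl :: "'a \<times> ('a \<Rightarrow> real) \<Rightarrow> real" where
  "cpl z = snd z (fst z)"

definition zcomb :: "real \<Rightarrow> 'a::real_vector \<times> ('a \<Rightarrow> real) \<Rightarrow> 'a \<times> ('a \<Rightarrow> real) \<Rightarrow> 'a \<times> ('a \<Rightarrow> real)" where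
  "zcomb t z w = (t *\<^sub>R fst z + (1 - t) *\<^sub>R fst w, \<lambda>y. t * snd z y + (1 - t) * snd w y)"

text \<open>Convexity of an extended-real function on Z (convexity of its epigraph).\<close>
definition convex_Z :: "'a::real_vector topology \<Rightarrow> ('a \<times> ('a \<Rightarrow> real) \<Rightarrow> ereal) \<Rightarrow> bool" where
  "convex_Z \<tau> h \<longleftrightarrow>
     (\<forall>z\<in>Zset \<tau>. \<forall>w\<in>Zset \<tau>. \<forall>r s t. h z \<le> ereal r \<and> h w \<le> ereal s \<and> 0 \<le> t \<and> t \<le> 1
        \<longrightarrow> h (zcomb t z w) \<le> ereal (t * r + (1 - t) * s))"

definition proper_Z :: "'a::real_vector topology \<Rightarrow> ('a \<times> ('a \<Rightarrow> real) \<Rightarrow> ereal) \<Rightarrow> bool" where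
  "proper_Z \<tau> h \<longleftrightarrow> (\<forall>z\<in>Zset \<tau>. h z \<noteq> -\<infinity>) \<and> (\<exists>z\<in>Zset \<tau>. h z \<noteq> \<infinity>)"

definition lsc_Z :: "'a::real_vector topology \<Rightarrow> ('a \<times> ('a \<Rightarrow> real) \<Rightarrow> ereal) \<Rightarrow> bool" where
  "lsc_Z \<tau> h \<longleftrightarrow> (\<forall>r::real. closedin (Ztop \<tau>) {z \<in> topspace (Ztop \<tau>). h z \<le> ereal r})"

text \<open>Operators T : X => X* identified with their graphs.\<close>
definition monotone_op :: "('a::real_vector \<times> ('a \<Rightarrow> real)) set \<Rightarrow> bool" where
  "monotone_op T \<longleftrightarrow> (\<forall>(x, f)\<in>T. \<forall>(y, g)\<in>T. 0 \<le> f (x - y) - g (x - y))"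

definition M_ops :: "'a::real_vector topology \<Rightarrow> ('a \<times> ('a \<Rightarrow> real)) set set" where
  "M_ops \<tau> = {T. T \<subseteq> Zset \<tau> \<and> monotone_op T \<and> T \<noteq> {}}"

text \<open>Fitzpatrick function; Sup of the empty set is -infinity.\<close>
definition fitz :: "('a \<times> ('a \<Rightarrow> real)) set \<Rightarrow> 'a \<times> ('a \<Rightarrow> real) \<Rightarrow> ereal" where
  "fitz T z = (SUP p\<in>T. ereal (snd p (fst z) + snd z (fst p) - snd p (fst p)))"

definition restr :: "('a \<times> ('a \<Rightarrow> real)) set \<Rightarrow> 'a set \<Rightarrow> ('a \<times> ('a \<Rightarrow> real)) set" where
  "restr T V = T \<inter> (V \<times> UNIV)"

definition representable :: "'a::real_vector topology \<Rightarrow> ('a \<times> ('a \<Rightarrow> real)) set \<Rightarrow> bool" where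
  "representable \<tau> T \<longleftrightarrow>
     (\<exists>h. proper_Z \<tau> h \<and> convex_Z \<tau> h \<and> lsc_Z \<tau> h \<and>
          (\<forall>z\<in>Zset \<tau>. ereal (cpl z) \<le> h z) \<and>
          {z \<in> Zset \<tau>. h z = ereal (cpl z)} = T)"

definition identifies :: "'a::real_vector topology \<Rightarrow> 'a set \<Rightarrow> ('a \<times> ('a \<Rightarrow> real)) set \<Rightarrow> bool" where
  "identifies \<tau> V T \<longleftrightarrow> {z \<in> V \<times> dual \<tau>. fitz (restr T V) z \<le> ereal (cpl z)} \<subseteq> T"

definition V_NI :: "'a::real_vector topology \<Rightarrow> 'a set \<Rightarrow> ('a \<times> ('a \<Rightarrow> real)) set \<Rightarrow> bool" where
  "V_NI \<tau> V T \<longleftrightarrow> (\<forall>z \<in> V \<times> dual \<tau>. ereal (cpl z) \<le> fitz (restr T V) z)"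

definition core :: "'a::real_vector set \<Rightarrow> 'a set" where
  "core V = {x \<in> V. \<forall>y. \<exists>e>0. \<forall>t. 0 \<le> t \<and> t \<le> e \<longrightarrow> x + t *\<^sub>R y \<in> V}"

definition alg_open :: "'a::real_vector set \<Rightarrow> bool" where
  "alg_open V \<longleftrightarrow> core V = V"

end

theory Submission
  imports Defs "HOL-Analysis.Finite_Function_Topology"
begin

text \<open>
  For monotone \<open>T\<close> the Fitzpatrick function \<open>fitz T\<close> is convex and lower semicontinuous (a
  supremum of continuous affine functions) and lies below the coupling on \<open>T\<close>; identification by
  \<open>V\<close> immediately gives the \<open>V\<close>-NI property, and for \<open>V = X\<close> it makes \<open>fitz T\<close> a representative.

  Conversely, convexity of a representative \<open>h \<ge> c\<close> at the midpoint of two points of \<open>T\<close> gives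
  monotonicity. If \<open>V\<close> did not identify \<open>T\<close>, some \<open>z\<^sub>0 = (x\<^sub>0, f\<^sub>0) \<in> V \<times> X\<^sup>*\<close> outside
  \<open>T\<close> would have nonnegative monotonicity gap with every point of \<open>T|\<^sub>V\<close> while \<open>h z\<^sub>0 > c z\<^sub>0\<close>.
  A Hahn-Banach separation of \<open>(z\<^sub>0, c z\<^sub>0)\<close> from the epigraph of \<open>h\<close>, carried out in
  \<open>X \<times> \<real>\<^sup>K \<times> \<real>\<close> for the finite set \<open>K\<close> of points seen by a weak-star neighbourhood of
  \<open>f\<^sub>0\<close>, yields a direction in which a small move of \<open>z\<^sub>0\<close> inside \<open>V \<times> X\<^sup>*\<close> makes
  \<open>fitz (restr T V)\<close> drop strictly below the coupling, contradicting the \<open>V\<close>-NI property.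
\<close>

section \<open>Hahn-Banach and separation in real vector spaces\<close>

definition sublinear :: "('v::real_vector \<Rightarrow> real) \<Rightarrow> bool" where
  "sublinear p \<longleftrightarrow> (\<forall>x y. p (x + y) \<le> p x + p y) \<and> (\<forall>t x. 0 < t \<longrightarrow> p (t *\<^sub>R x) = t * p x)"

lemma sublinearD:
  assumes "sublinear p"
  shows sublinear_add: "p (x + y) \<le> p x + p y"
    and sublinear_scale: "0 < t \<Longrightarrow> p (t *\<^sub>R x) = t * p x"
  using assms unfolding sublinear_def by blast+

lemma sublinear_zero: "sublinear p \<Longrightarrow> p 0 = 0"
  using sublinear_scale[of p 2 0] by simp

lemma sublinear_neg_le: "sublinear p \<Longrightarrow> - p (- x) \<le> p x"
  using sublinear_add[of p x "- x"] sublinear_zero[of p] by simp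

definition dominated_graph :: "('v::real_vector \<Rightarrow> real) \<Rightarrow> ('v \<times> real) set \<Rightarrow> bool" where
  "dominated_graph p G \<longleftrightarrow> subspace G \<and> (\<forall>(x, a)\<in>G. a \<le> p x)"

lemma dominated_graph_unique:
  assumes p: "sublinear p" and G: "dominated_graph p G" and "(x, a) \<in> G" "(x, b) \<in> G"
  shows "a = b"
proof -
  have sub: "subspace G" and dom: "\<And>y c. (y, c) \<in> G \<Longrightarrow> c \<le> p y"
    using G unfolding dominated_graph_def by auto
  have "(0, a - b) \<in> G" "(0, b - a) \<in> G"
    using subspace_diff[OF sub, of "(x, a)" "(x, b)"] subspace_diff[OF sub, of "(x, b)" "(x, a)"]
      assms(3,4)
    by simp_all
  then have "a - b \<le> p 0" "b - a \<le> p 0"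
    using dom by blast+
  then show ?thesis using sublinear_zero[OF p] by simp
qed

lemma dominated_graph_chain_Union:
  assumes "\<C> \<noteq> {}" "subset.chain {G. dominated_graph p G} \<C>"
  shows "dominated_graph p (\<Union>\<C>)"
proof -
  have dom: "\<And>G. G \<in> \<C> \<Longrightarrow> dominated_graph p G"
    and chain: "\<And>G H. G \<in> \<C> \<Longrightarrow> H \<in> \<C> \<Longrightarrow> G \<subseteq> H \<or> H \<subseteq> G"
    using assms(2) unfolding subset.chain_def by blast+
  have "subspace (\<Union>\<C>)"
    unfolding subspace_def
  proof (intro conjI ballI allI)
    show "0 \<in> \<Union>\<C>"
      using assms(1) dom subspace_0 unfolding dominated_graph_def by blast
  next
    fix u v assume "u \<in> \<Union>\<C>" "v \<in> \<Union>\<C>"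
    then obtain G H where "G \<in> \<C>" "H \<in> \<C>" "u \<in> G" "v \<in> H" by blast
    with chain[of G H] dom show "u + v \<in> \<Union>\<C>"
      unfolding dominated_graph_def by (metis UnionI subset_iff subspace_add)
  next
    fix c u assume "u \<in> \<Union>\<C>"
    with dom show "c *\<^sub>R u \<in> \<Union>\<C>"
      unfolding dominated_graph_def by (metis UnionE UnionI subspace_mul)
  qed
  then show ?thesis
    using dom unfolding dominated_graph_def by fast
qed

lemma dominated_graph_extension_value:
  assumes p: "sublinear p" and G: "dominated_graph p G"
  shows "\<exists>c. \<forall>(s, a)\<in>G. a - p (s - x) \<le> c \<and> c \<le> p (s + x) - a"
proof -
  have sub: "subspace G" and dom: "\<And>y c. (y, c) \<in> G \<Longrightarrow> c \<le> p y"
    using G unfolding dominated_graph_def by auto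
  have between: "a - p (s - x) \<le> p (s' + x) - a'" if "(s, a) \<in> G" "(s', a') \<in> G" for s a s' a'
  proof -
    have "a + a' \<le> p (s + s')"
      using dom subspace_add[OF sub that] by simp
    also have "\<dots> \<le> p (s - x) + p (s' + x)"
      using sublinear_add[OF p, of "s - x" "s' + x"] by simp
    finally show ?thesis by simp
  qed
  have zero: "(0, 0) \<in> G"
    using subspace_0[OF sub] by (simp add: zero_prod_def)
  define L where "L = (\<lambda>(s, a). a - p (s - x)) ` G"
  have "L \<noteq> {}"
    using zero unfolding L_def by blast
  moreover have "bdd_above L"
    using between[OF _ zero] unfolding L_def by (intro bdd_aboveI[of _ "p x"]) auto
  ultimately have "\<forall>(s, a)\<in>G. a - p (s - x) \<le> Sup L \<and> Sup L \<le> p (s + x) - a"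
    using between by (auto intro!: cSup_upper cSup_least simp: L_def)
  then show ?thesis by blast
qed

lemma dominated_graph_extension_dominated:
  assumes p: "sublinear p" and G: "dominated_graph p G"
    and c: "\<forall>(s, a)\<in>G. a - p (s - x) \<le> c \<and> c \<le> p (s + x) - a"
    and sa: "(s, a) \<in> G"
  shows "a + t * c \<le> p (s + t *\<^sub>R x)"
proof -
  have scaled: "(r *\<^sub>R s, r * a) \<in> G" for r
    using G sa subspace_mul[of G "(s, a)" r] unfolding dominated_graph_def by simp
  consider "t < 0" | "t = 0" | "t > 0" by linarith
  then show ?thesis
  proof cases
    case 1
    define r where "r = 1 / (- t)"
    have "r * a - p (r *\<^sub>R s - x) \<le> c"
      using c scaled[of r] by auto
    then have "a - (- t) * p (r *\<^sub>R s - x) \<le> (- t) * c"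
      using 1 by (simp add: r_def field_simps)
    moreover have "(- t) * p (r *\<^sub>R s - x) = p (s + t *\<^sub>R x)"
      using sublinear_scale[OF p, of "- t" "r *\<^sub>R s - x"] 1 by (simp add: r_def scaleR_diff_right)
    ultimately show ?thesis by simp
  next
    case 2
    then show ?thesis using G sa unfolding dominated_graph_def by auto
  next
    case 3
    define r where "r = 1 / t"
    have "c \<le> p (r *\<^sub>R s + x) - r * a"
      using c scaled[of r] by auto
    then have "t * c \<le> t * p (r *\<^sub>R s + x) - a"
      using 3 by (simp add: r_def field_simps)
    moreover have "t * p (r *\<^sub>R s + x) = p (s + t *\<^sub>R x)"
      using sublinear_scale[OF p 3, of "r *\<^sub>R s + x"] 3 by (simp add: r_def scaleR_add_right)
    ultimately show ?thesis by simp
  qed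
qed

lemma dominated_graph_extend:
  assumes p: "sublinear p" and G: "dominated_graph p G"
  shows "\<exists>G'. dominated_graph p G' \<and> G \<subseteq> G' \<and> x \<in> fst ` G'"
proof -
  have sub: "subspace G"
    using G unfolding dominated_graph_def by auto
  obtain c where c: "\<forall>(s, a)\<in>G. a - p (s - x) \<le> c \<and> c \<le> p (s + x) - a"
    using dominated_graph_extension_value[OF p G, of x] by blast
  define G' where "G' = {g + w | g w. g \<in> G \<and> w \<in> span {(x, c)}}"
  have "subspace G'"
    unfolding G'_def by (rule subspace_sums[OF sub subspace_span])
  moreover have "b \<le> p y" if yb: "(y, b) \<in> G'" for y b
  proof -
    obtain s a t where "(s, a) \<in> G" "y = s + t *\<^sub>R x" "b = a + t * c"
      using yb unfolding G'_def span_singleton by auto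
    then show ?thesis
      using dominated_graph_extension_dominated[OF p G c] by simp
  qed
  moreover have "G \<subseteq> G'"
  proof
    fix g assume "g \<in> G"
    then show "g \<in> G'"
      unfolding G'_def by (intro CollectI exI[of _ g] exI[of _ 0]) (simp add: span_zero)
  qed
  moreover have "(x, c) \<in> G'"
    unfolding G'_def
    by (intro CollectI exI[of _ 0] exI[of _ "(x, c)"]) (simp add: subspace_0[OF sub] span_base)
  ultimately show ?thesis
    unfolding dominated_graph_def by force
qed

lemma dominated_graph_total:
  assumes p: "sublinear p" and G: "dominated_graph p G"
  shows "\<exists>M. dominated_graph p M \<and> G \<subseteq> M \<and> fst ` M = UNIV"
proof -
  define \<A> where "\<A> = {M. dominated_graph p M \<and> G \<subseteq> M}"
  have "\<A> \<noteq> {}"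
    using G unfolding \<A>_def by blast
  moreover have "\<Union>\<C> \<in> \<A>" if \<C>: "\<C> \<noteq> {}" "subset.chain \<A> \<C>" for \<C>
  proof -
    have "\<C> \<subseteq> \<A>" "\<forall>X\<in>\<C>. \<forall>Y\<in>\<C>. X \<subseteq> Y \<or> Y \<subseteq> X"
      using \<C>(2) unfolding subset.chain_def by auto
    then have "subset.chain {G. dominated_graph p G} \<C>"
      unfolding subset.chain_def \<A>_def by blast
    then have "dominated_graph p (\<Union>\<C>)"
      by (rule dominated_graph_chain_Union[OF \<C>(1)])
    moreover have "G \<subseteq> \<Union>\<C>"
      using \<C>(1) \<open>\<C> \<subseteq> \<A>\<close> unfolding \<A>_def by blast
    ultimately show ?thesis
      unfolding \<A>_def by blast
  qed
  ultimately obtain M where M: "M \<in> \<A>" and max: "\<And>X. X \<in> \<A> \<Longrightarrow> M \<subseteq> X \<Longrightarrow> X = M"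
    using subset_Zorn_nonempty[of \<A>] by blast
  have "x \<in> fst ` M" for x
  proof -
    obtain M' where "dominated_graph p M'" "M \<subseteq> M'" "x \<in> fst ` M'"
      using dominated_graph_extend[OF p, of M x] M unfolding \<A>_def by blast
    moreover from this have "M' \<in> \<A>"
      using M unfolding \<A>_def by blast
    ultimately show ?thesis
      using max by blast
  qed
  then show ?thesis
    using M unfolding \<A>_def by blast
qed

lemma dominated_graph_span_singleton:
  assumes p: "sublinear p"
  shows "dominated_graph p (span {(u, p u)})"
proof -
  have "t * p u \<le> p (t *\<^sub>R u)" for t
  proof -
    consider "t < 0" | "t = 0" | "t > 0" by linarith
    then show ?thesis
    proof cases
      case 1
      have "t * p u \<le> (- t) * p (- u)"
        using mult_left_mono[OF sublinear_neg_le[OF p, of "- u"], of "- t"] 1 by simp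
      also have "\<dots> = p (t *\<^sub>R u)"
        using sublinear_scale[OF p, of "- t" "- u"] 1 by simp
      finally show ?thesis .
    qed (simp_all add: sublinear_zero[OF p] sublinear_scale[OF p])
  qed
  then have "\<forall>(x, a)\<in>span {(u, p u)}. a \<le> p x"
    unfolding span_singleton by auto
  then show ?thesis
    unfolding dominated_graph_def by simp
qed

lemma dominated_graph_total_linear:
  assumes p: "sublinear p" and M: "dominated_graph p M" "fst ` M = UNIV"
  obtains F where "linear F" "\<And>x. F x \<le> p x" "\<And>x a. (x, a) \<in> M \<longleftrightarrow> a = F x"
proof -
  have sub: "subspace M"
    using M(1) unfolding dominated_graph_def by blast
  define F where "F x = (THE a. (x, a) \<in> M)" for x
  have graph: "(x, a) \<in> M \<longleftrightarrow> a = F x" for x a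
  proof -
    obtain b where "(x, b) \<in> M"
      using M(2) by force
    then have "(x, a) \<in> M \<longleftrightarrow> a = b" "F x = b"
      using dominated_graph_unique[OF p M(1)] unfolding F_def by blast+
    then show ?thesis by simp
  qed
  have "linear F"
  proof (rule linearI)
    show "F (x + y) = F x + F y" for x y
      using subspace_add[OF sub, of "(x, F x)" "(y, F y)"] graph by simp
    show "F (c *\<^sub>R x) = c *\<^sub>R F x" for c x
      using subspace_mul[OF sub, of "(x, F x)" c] graph by simp
  qed
  moreover have "F x \<le> p x" for x
  proof -
    have "(x, F x) \<in> M"
      using graph by simp
    then show ?thesis
      using M(1) unfolding dominated_graph_def by auto
  qed
  ultimately show thesis
    using that graph by blast
qed

theorem hahn_banach:
  assumes p: "sublinear p"
  shows "\<exists>F. linear F \<and> (\<forall>x. F x \<le> p x) \<and> F u = p u"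
proof -
  obtain M where M: "dominated_graph p M" "span {(u, p u)} \<subseteq> M" "fst ` M = UNIV"
    using dominated_graph_total[OF p dominated_graph_span_singleton[OF p]] by blast
  obtain F where F: "linear F" "\<And>x. F x \<le> p x" "\<And>x a. (x, a) \<in> M \<longleftrightarrow> a = F x"
    using dominated_graph_total_linear[OF p M(1,3)] by blast
  have "(u, p u) \<in> M"
    using M(2) span_base[of "(u, p u)"] by blast
  then have "F u = p u"
    using F(3) by simp
  then show ?thesis
    using F(1,2) by blast
qed

lemma alg_open_iff:
  "alg_open V \<longleftrightarrow> (\<forall>x\<in>V. \<forall>y. \<exists>e>0. \<forall>t. 0 \<le> t \<and> t \<le> e \<longrightarrow> x + t *\<^sub>R y \<in> V)"
  unfolding alg_open_def core_def by blast

lemma alg_openD: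
  assumes "alg_open V" "x \<in> V"
  obtains e where "e > 0" "\<And>t. 0 \<le> t \<Longrightarrow> t \<le> e \<Longrightarrow> x + t *\<^sub>R y \<in> V"
  using assms unfolding alg_open_iff by blast

definition minkowski_functional :: "'v::real_vector set \<Rightarrow> 'v \<Rightarrow> real" where
  "minkowski_functional G x = Inf {t. 0 < t \<and> x /\<^sub>R t \<in> G}"

context
  fixes G :: "'v::real_vector set"
  assumes convex: "convex G" and zero: "0 \<in> G" and alg_open: "alg_open G"
begin

private abbreviation "S x \<equiv> {t. 0 < t \<and> x /\<^sub>R t \<in> G}"

private lemma scalings_nonempty: "S x \<noteq> {}"
proof -
  obtain e where e: "e > 0" "\<And>t. 0 \<le> t \<Longrightarrow> t \<le> e \<Longrightarrow> 0 + t *\<^sub>R x \<in> G"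
    using alg_openD[OF alg_open zero] by blast
  then have "1 / e \<in> S x" by simp
  then show ?thesis by blast
qed

private lemma scalings_upward:
  assumes "t \<in> S x" "t \<le> t'"
  shows "t' \<in> S x"
proof -
  have t: "0 < t" "x /\<^sub>R t \<in> G"
    using assms(1) by auto
  then have "(t / t') *\<^sub>R (x /\<^sub>R t) + (1 - t / t') *\<^sub>R 0 \<in> G"
    using assms(2) by (intro convexD[OF convex _ zero]) auto
  then show ?thesis
    using t assms(2) by (auto simp: inverse_eq_divide)
qed

private lemma minkowski_functional_le: "t \<in> S x \<Longrightarrow> minkowski_functional G x \<le> t"
  unfolding minkowski_functional_def by (rule cInf_lower) (auto intro: bdd_belowI[of _ 0])

private lemma minkowski_functional_ge: "(\<And>t. t \<in> S x \<Longrightarrow> b \<le> t) \<Longrightarrow> b \<le> minkowski_functional G x"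
  unfolding minkowski_functional_def by (rule cInf_greatest[OF scalings_nonempty])

private lemma minkowski_functional_scale_le:
  assumes c: "c > 0"
  shows "minkowski_functional G (c *\<^sub>R x) \<le> c * minkowski_functional G x"
proof -
  have "minkowski_functional G (c *\<^sub>R x) / c \<le> minkowski_functional G x"
  proof (rule minkowski_functional_ge)
    fix t assume "t \<in> S x"
    then have "minkowski_functional G (c *\<^sub>R x) \<le> c * t"
      using c by (intro minkowski_functional_le) (simp add: zero_less_mult_iff field_simps)
    then show "minkowski_functional G (c *\<^sub>R x) / c \<le> t"
      using c by (simp add: divide_le_eq mult.commute)
  qed
  then show ?thesis
    using c by (simp add: divide_le_eq mult.commute)
qed

lemma minkowski_functional_scale:
  assumes c: "c > 0"
  shows "minkowski_functional G (c *\<^sub>R x) = c * minkowski_functional G x"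
proof (rule antisym)
  have "minkowski_functional G x \<le> (1 / c) * minkowski_functional G (c *\<^sub>R x)"
    using minkowski_functional_scale_le[of "1 / c" "c *\<^sub>R x"] c by simp
  then show "c * minkowski_functional G x \<le> minkowski_functional G (c *\<^sub>R x)"
    using c by (simp add: field_simps)
qed (rule minkowski_functional_scale_le[OF c])

private lemma scalings_add:
  assumes "t \<in> S x" "s \<in> S y"
  shows "t + s \<in> S (x + y)"
proof -
  have t: "t > 0" "x /\<^sub>R t \<in> G" and s: "s > 0" "y /\<^sub>R s \<in> G"
    using assms by auto
  have "(t / (t + s)) *\<^sub>R (x /\<^sub>R t) + (s / (t + s)) *\<^sub>R (y /\<^sub>R s) \<in> G"
    using t s by (intro convexD[OF convex]) (auto simp: add_divide_distrib[symmetric])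
  then show ?thesis
    using t s by (simp add: scaleR_add_right inverse_eq_divide)
qed

lemma minkowski_functional_add:
  "minkowski_functional G (x + y) \<le> minkowski_functional G x + minkowski_functional G y"
proof -
  have "minkowski_functional G (x + y) - minkowski_functional G x \<le> s" if s: "s \<in> S y" for s
  proof -
    have "minkowski_functional G (x + y) - s \<le> minkowski_functional G x"
      using minkowski_functional_le scalings_add[OF _ s]
      by (intro minkowski_functional_ge) fastforce
    then show ?thesis by simp
  qed
  then have "minkowski_functional G (x + y) - minkowski_functional G x \<le> minkowski_functional G y"
    by (rule minkowski_functional_ge)
  then show ?thesis by simp
qed

lemma sublinear_minkowski_functional: "sublinear (minkowski_functional G)"
  unfolding sublinear_def using minkowski_functional_add minkowski_functional_scale by blast

lemma minkowski_functional_less_one: "g \<in> G \<Longrightarrow> minkowski_functional G g < 1"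
proof -
  assume g: "g \<in> G"
  obtain e where e: "e > 0" "\<And>t. 0 \<le> t \<Longrightarrow> t \<le> e \<Longrightarrow> g + t *\<^sub>R g \<in> G"
    using alg_openD[OF alg_open g] by blast
  have "(1 + e) *\<^sub>R g \<in> G"
    using e by (simp add: scaleR_add_left)
  then have "minkowski_functional G g \<le> 1 / (1 + e)"
    using e(1) by (intro minkowski_functional_le) simp
  also have "\<dots> < 1"
    using e(1) by simp
  finally show ?thesis .
qed

lemma minkowski_functional_ge_one: "x \<notin> G \<Longrightarrow> 1 \<le> minkowski_functional G x"
proof (rule minkowski_functional_ge, rule ccontr)
  fix t assume "x \<notin> G" "t \<in> S x" "\<not> 1 \<le> t"
  then show False
    using scalings_upward[of t x 1] by simp
qed

end

lemma alg_open_translated_differences: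
  assumes "alg_open A"
  shows "alg_open ((+) c ` (\<Union>a\<in>A. \<Union>d\<in>D. {a - d}))" (is "alg_open ?G")
  unfolding alg_open_iff
proof (intro ballI allI)
  fix g y assume "g \<in> ?G"
  then obtain a d where ad: "a \<in> A" "d \<in> D" "g = c + (a - d)"
    by blast
  then obtain e where "e > 0" "\<And>t. 0 \<le> t \<Longrightarrow> t \<le> e \<Longrightarrow> a + t *\<^sub>R y \<in> A"
    using alg_openD[OF assms] by metis
  moreover have "g + t *\<^sub>R y = c + ((a + t *\<^sub>R y) - d)" for t
    using ad by (simp add: algebra_simps)
  ultimately show "\<exists>e>0. \<forall>t. 0 \<le> t \<and> t \<le> e \<longrightarrow> g + t *\<^sub>R y \<in> ?G"
    using ad(2) by blast
qed

theorem separation_alg_open: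
  fixes A D :: "'v::real_vector set"
  assumes "convex A" "convex D" "A \<noteq> {}" "D \<noteq> {}" "A \<inter> D = {}" "alg_open A"
  shows "\<exists>F::'v \<Rightarrow> real. linear F \<and> (\<forall>a\<in>A. \<forall>d\<in>D. F a < F d) \<and> (\<forall>a\<in>A. \<exists>a'\<in>A. F a < F a')"
proof -
  obtain a0 d0 where a0: "a0 \<in> A" and d0: "d0 \<in> D"
    using assms(3,4) by blast
  define c where "c = d0 - a0"
  define G where "G = (+) c ` (\<Union>a\<in>A. \<Union>d\<in>D. {a - d})"
  have "convex G"
    unfolding G_def by (intro convex_translation convex_differences assms(1,2))
  moreover have "0 \<in> G"
    unfolding G_def c_def using a0 d0 by force
  moreover have "alg_open G"
    unfolding G_def by (rule alg_open_translated_differences[OF assms(6)])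
  ultimately have p: "sublinear (minkowski_functional G)"
    and G_less: "\<And>g. g \<in> G \<Longrightarrow> minkowski_functional G g < 1"
    and c_ge: "c \<notin> G \<Longrightarrow> 1 \<le> minkowski_functional G c"
    by (simp_all add: sublinear_minkowski_functional minkowski_functional_less_one
        minkowski_functional_ge_one)
  have "c \<notin> G"
    using assms(5) unfolding G_def by auto
  then have c: "1 \<le> minkowski_functional G c"
    by (rule c_ge)
  obtain F where F: "linear F" "\<And>x. F x \<le> minkowski_functional G x"
    "F c = minkowski_functional G c"
    using hahn_banach[OF p] by blast
  have "F a < F d" if "a \<in> A" "d \<in> D" for a d
  proof -
    have "F (c + (a - d)) < 1"
      using F(2) G_less[of "c + (a - d)"] that unfolding G_def
      by (meson UN_I image_eqI insertI1 le_less_trans)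
    then show ?thesis
      using F c by (simp add: linear_add linear_diff)
  qed
  moreover have "\<exists>a'\<in>A. F a < F a'" if a: "a \<in> A" for a
  proof -
    obtain e where "e > 0" "a + e *\<^sub>R c \<in> A"
      using alg_openD[OF assms(6) a, of c] by (metis order_refl less_imp_le)
    moreover have "F (a + e *\<^sub>R c) = F a + e * F c"
      using F(1) by (simp add: linear_add linear_scale)
    ultimately show ?thesis
      using F(3) c by (metis less_add_same_cancel1 mult_pos_pos order_less_le_trans zero_less_one)
  qed
  ultimately show ?thesis
    using F(1) by blast
qed

section \<open>Locally convex topologies and their duals\<close>

lemma hlcs_topspace: "hlcs \<tau> \<Longrightarrow> topspace \<tau> = UNIV"
  unfolding hlcs_def by blast

lemma hlcs_continuous_map_add:
  assumes "hlcs \<tau>" "continuous_map X \<tau> f" "continuous_map X \<tau> g"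
  shows "continuous_map X \<tau> (\<lambda>x. f x + g x)"
proof -
  have "continuous_map (prod_topology \<tau> \<tau>) \<tau> (\<lambda>(x, y). x + y)"
    using assms(1) unfolding hlcs_def by blast
  from continuous_map_compose[OF continuous_map_pairedI[OF assms(2,3)] this]
  show ?thesis by (simp add: o_def)
qed

lemma hlcs_continuous_map_scaleR:
  assumes "hlcs \<tau>" "continuous_map X euclideanreal f" "continuous_map X \<tau> g"
  shows "continuous_map X \<tau> (\<lambda>x. f x *\<^sub>R g x)"
proof -
  have "continuous_map (prod_topology euclideanreal \<tau>) \<tau> (\<lambda>(a, x). a *\<^sub>R x)"
    using assms(1) unfolding hlcs_def by blast
  from continuous_map_compose[OF continuous_map_pairedI[OF assms(2,3)] this]
  show ?thesis by (simp add: o_def)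
qed

lemma hlcs_openin_affine_preimage:
  assumes "hlcs \<tau>" "openin \<tau> U"
  shows "openin \<tau> {x. c *\<^sub>R x + a \<in> U}"
proof -
  have "continuous_map \<tau> \<tau> (\<lambda>x. c *\<^sub>R x + a)"
    using assms(1) hlcs_topspace[OF assms(1)]
    by (intro hlcs_continuous_map_add hlcs_continuous_map_scaleR) auto
  from openin_continuous_map_preimage[OF this assms(2)]
  show ?thesis using hlcs_topspace[OF assms(1)] by simp
qed

lemma hlcs_openin_imp_alg_open:
  assumes "hlcs \<tau>" "openin \<tau> U"
  shows "alg_open U"
  unfolding alg_open_iff
proof (intro ballI allI)
  fix a v assume a: "a \<in> U"
  have "continuous_map euclideanreal \<tau> (\<lambda>t. t *\<^sub>R v + a)"
    using assms(1) hlcs_topspace[OF assms(1)]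
    by (intro hlcs_continuous_map_add hlcs_continuous_map_scaleR) auto
  from openin_continuous_map_preimage[OF this assms(2)]
  have "open {t. t *\<^sub>R v + a \<in> U}"
    by (simp add: open_openin[symmetric])
  then obtain e where e: "e > 0" "ball 0 e \<subseteq> {t. t *\<^sub>R v + a \<in> U}"
    using a open_contains_ball_eq[of "{t. t *\<^sub>R v + a \<in> U}" 0] by auto
  show "\<exists>e>0. \<forall>t. 0 \<le> t \<and> t \<le> e \<longrightarrow> a + t *\<^sub>R v \<in> U"
  proof (intro exI[of _ "e / 2"] conjI allI impI)
    fix t :: real assume "0 \<le> t \<and> t \<le> e / 2"
    then have "t \<in> ball 0 e"
      using e(1) by (simp add: dist_real_def)
    then show "a + t *\<^sub>R v \<in> U"
      using e(2) by (auto simp: add.commute)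
  qed (use e(1) in simp)
qed

lemma linear_abs_bounded_continuous:
  fixes g :: "'a::real_vector \<Rightarrow> real"
  assumes \<tau>: "hlcs \<tau>" and g: "linear g" and N: "openin \<tau> N" "0 \<in> N"
    and bdd: "\<And>y. y \<in> N \<Longrightarrow> \<bar>g y\<bar> \<le> M"
  shows "continuous_map \<tau> euclideanreal g"
  unfolding continuous_map_def
proof (intro conjI allI impI)
  show "g \<in> topspace \<tau> \<rightarrow> topspace euclideanreal" by simp
next
  fix S assume S: "openin euclideanreal S"
  show "openin \<tau> {x \<in> topspace \<tau>. g x \<in> S}"
  proof (subst openin_subopen, intro ballI)
    fix x assume x: "x \<in> {x \<in> topspace \<tau>. g x \<in> S}"
    then obtain d where d: "d > 0" "ball (g x) d \<subseteq> S"
      using S by (auto simp: open_openin[symmetric] open_contains_ball_eq)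
    define c where "c = d / (M + 1)"
    have c: "c > 0" "c * M < d"
      unfolding c_def using d bdd[OF N(2)] by (auto simp: field_simps)
    define W where "W = {z. (1 / c) *\<^sub>R z + (- (1 / c) *\<^sub>R x) \<in> N}"
    have "g z \<in> S" if "z \<in> W" for z
    proof -
      have "g ((1 / c) *\<^sub>R z + (- (1 / c)) *\<^sub>R x) = (1 / c) * (g z - g x)"
        by (simp add: linear_add[OF g] linear_diff[OF g] linear_scale[OF g] algebra_simps)
      then have "\<bar>(1 / c) * (g z - g x)\<bar> \<le> M"
        using bdd that unfolding W_def by (metis mem_Collect_eq)
      then have "\<bar>g z - g x\<bar> < d"
        using c by (simp add: abs_mult field_simps)
      then show ?thesis
        using d by (auto simp: dist_real_def)
    qed
    moreover have "openin \<tau> W"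
      unfolding W_def by (rule hlcs_openin_affine_preimage[OF \<tau> N(1)])
    moreover have "x \<in> W"
      unfolding W_def using N(2) by simp
    ultimately show "\<exists>T. openin \<tau> T \<and> x \<in> T \<and> T \<subseteq> {x \<in> topspace \<tau>. g x \<in> S}"
      using hlcs_topspace[OF \<tau>] by blast
  qed
qed

text \<open>The symmetric neighbourhood \<open>U \<inter> - U\<close> turns the one-sided bound into \<open>\<bar>g\<bar> \<le> M\<close>.\<close>
lemma linear_bounded_above_continuous:
  fixes g :: "'a::real_vector \<Rightarrow> real"
  assumes \<tau>: "hlcs \<tau>" and g: "linear g" and U: "openin \<tau> U" "0 \<in> U"
    and bdd: "\<And>y. y \<in> U \<Longrightarrow> g y \<le> M"
  shows "continuous_map \<tau> euclideanreal g"
proof (rule linear_abs_bounded_continuous[OF \<tau> g])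
  show "openin \<tau> (U \<inter> {y. (- 1) *\<^sub>R y + 0 \<in> U})" "0 \<in> U \<inter> {y. (- 1) *\<^sub>R y + 0 \<in> U}"
    using U hlcs_openin_affine_preimage[OF \<tau> U(1), of "- 1" 0] by auto
  show "\<bar>g y\<bar> \<le> M" if "y \<in> U \<inter> {y. (- 1) *\<^sub>R y + 0 \<in> U}" for y
    using bdd[of y] bdd[of "- y"] that linear_neg[OF g, of y] by auto
qed

lemma continuous_map_weak_star_eval: "continuous_map (weak_star \<tau>) euclideanreal (\<lambda>f. f u)"
  unfolding weak_star_def
  by (intro continuous_map_from_subtopology
      continuous_map_product_projection[of u UNIV "\<lambda>_. euclideanreal", simplified])

lemma product_topology_nbhd:
  assumes W: "openin (product_topology (\<lambda>_. euclideanreal) UNIV) W" and f0: "f0 \<in> W"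
  shows "\<exists>K e. finite K \<and> e > 0 \<and> (\<forall>f. (\<Sum>k\<in>K. \<bar>f k - f0 k\<bar>) < e \<longrightarrow> f \<in> W)"
proof -
  obtain U where U: "finite {i. U i \<noteq> UNIV}" "\<And>i. openin euclideanreal (U i)"
     "f0 \<in> Pi\<^sub>E UNIV U" "Pi\<^sub>E UNIV U \<subseteq> W"
    using W f0 unfolding openin_product_topology_alt by auto
  define K where "K = {i. U i \<noteq> UNIV}"
  have "\<forall>k\<in>K. \<exists>d>0. ball (f0 k) d \<subseteq> U k"
  proof
    fix k
    have "open (U k)"
      using U(2)[of k] by (rule open_openin[THEN iffD2])
    moreover have "f0 k \<in> U k"
      using U(3) by auto
    ultimately show "\<exists>d>0. ball (f0 k) d \<subseteq> U k"
      using open_contains_ball_eq by metis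
  qed
  then obtain d where d: "\<And>k. k \<in> K \<Longrightarrow> d k > 0 \<and> ball (f0 k) (d k) \<subseteq> U k"
    by metis
  define e where "e = Min (insert 1 (d ` K))"
  have K: "finite K"
    using U(1) K_def by simp
  have e: "e > 0" "\<And>k. k \<in> K \<Longrightarrow> e \<le> d k"
    unfolding e_def using K d by auto
  have "f \<in> W" if f: "(\<Sum>k\<in>K. \<bar>f k - f0 k\<bar>) < e" for f
  proof -
    have "f i \<in> U i" for i
    proof (cases "i \<in> K")
      case True
      have "\<bar>f i - f0 i\<bar> \<le> (\<Sum>k\<in>K. \<bar>f k - f0 k\<bar>)"
        by (rule member_le_sum) (use True K in auto)
      then have "f i \<in> ball (f0 i) (d i)"
        using f e(2)[OF True] by (simp add: dist_real_def)
      then show ?thesis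
        using d[OF True] by blast
    qed (simp add: K_def)
    then show ?thesis
      using U(4) by (auto simp: PiE_iff)
  qed
  then show ?thesis
    using K e(1) by blast
qed

lemma weak_star_nbhd:
  assumes "openin (weak_star \<tau>) W" "f0 \<in> W"
  shows "\<exists>K e. finite K \<and> e > 0 \<and> (\<forall>f\<in>dual \<tau>. (\<Sum>k\<in>K. \<bar>f k - f0 k\<bar>) < e \<longrightarrow> f \<in> W)"
proof -
  obtain W' where "openin (product_topology (\<lambda>_. euclideanreal) UNIV) W'" "W = W' \<inter> dual \<tau>"
    using assms(1) unfolding weak_star_def openin_subtopology by blast
  then show ?thesis
    using product_topology_nbhd[of W' f0] assms(2) by blast
qed

lemma topspace_Ztop: "hlcs \<tau> \<Longrightarrow> topspace (Ztop \<tau>) = UNIV \<times> dual \<tau>"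
  unfolding Ztop_def weak_star_def by (simp add: topspace_prod_topology hlcs_topspace)

lemma dual_linear: "f \<in> dual \<tau> \<Longrightarrow> linear f"
  unfolding dual_def by simp

lemma dual_continuous_map: "f \<in> dual \<tau> \<Longrightarrow> continuous_map \<tau> euclideanreal f"
  unfolding dual_def by simp

lemma
  assumes "f \<in> dual \<tau>"
  shows dual_add: "f (x + y) = f x + f y"
    and dual_diff: "f (x - y) = f x - f y"
    and dual_scale: "f (c *\<^sub>R x) = c * f x"
    and dual_minus: "f (- x) = - f x"
  using linear_add[OF dual_linear[OF assms]] linear_diff[OF dual_linear[OF assms]]
    linear_scale[OF dual_linear[OF assms]] linear_neg[OF dual_linear[OF assms]] by simp_all

lemma dual_lincomb:
  assumes "f \<in> dual \<tau>" "g \<in> dual \<tau>"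
  shows "(\<lambda>x. a * f x + b * g x) \<in> dual \<tau>"
proof -
  have "linear (\<lambda>x. a * f x + b * g x)"
    by (rule linearI) (simp_all add: dual_add[OF assms(1)] dual_add[OF assms(2)]
        dual_scale[OF assms(1)] dual_scale[OF assms(2)] algebra_simps)
  moreover have "continuous_map \<tau> euclideanreal (\<lambda>x. a * f x + b * g x)"
    by (intro continuous_map_add continuous_map_real_mult_left dual_continuous_map assms)
  ultimately show ?thesis
    unfolding dual_def by simp
qed

lemma zero_in_dual: "(\<lambda>x. 0) \<in> dual \<tau>"
  unfolding dual_def by (simp add: linear_zero)

section \<open>The Fitzpatrick function and representable operators\<close>

definition fitz_term :: "'a \<times> ('a \<Rightarrow> real) \<Rightarrow> 'a \<times> ('a \<Rightarrow> real) \<Rightarrow> real" where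
  "fitz_term p z = snd p (fst z) + snd z (fst p) - snd p (fst p)"

lemma fitz_eq_SUP: "fitz T z = (SUP p\<in>T. ereal (fitz_term p z))"
  unfolding fitz_def fitz_term_def by simp

lemma fitz_le_iff: "fitz T z \<le> ereal r \<longleftrightarrow> (\<forall>p\<in>T. fitz_term p z \<le> r)"
  unfolding fitz_eq_SUP by (simp add: SUP_le_iff)

lemma fitz_term_le_fitz: "p \<in> T \<Longrightarrow> ereal (fitz_term p z) \<le> fitz T z"
  unfolding fitz_eq_SUP by (rule SUP_upper)

lemma cpl_le_fitz: "z \<in> T \<Longrightarrow> ereal (cpl z) \<le> fitz T z"
  using fitz_term_le_fitz[of z T z] unfolding fitz_term_def cpl_def by simp

lemma cpl_minus_fitz_term:
  assumes "u' \<in> dual \<tau>" "x' \<in> dual \<tau>"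
  shows "cpl (x, x') - fitz_term (u, u') (x, x') = u' (u - x) - x' (u - x)"
  unfolding cpl_def fitz_term_def using dual_diff[OF assms(1)] dual_diff[OF assms(2)] by simp

lemma fitz_le_cpl_iff:
  assumes "T \<subseteq> UNIV \<times> dual \<tau>" "x' \<in> dual \<tau>"
  shows "fitz T (x, x') \<le> ereal (cpl (x, x')) \<longleftrightarrow> (\<forall>(u, u')\<in>T. 0 \<le> u' (u - x) - x' (u - x))"
proof -
  have key: "fitz_term (u, u') (x, x') \<le> cpl (x, x') \<longleftrightarrow> 0 \<le> u' (u - x) - x' (u - x)"
    if "(u, u') \<in> T" for u u'
    using cpl_minus_fitz_term[of u' \<tau> x' x u] that assms by auto
  show ?thesis
    unfolding fitz_le_iff
  proof
    assume "\<forall>p\<in>T. fitz_term p (x, x') \<le> cpl (x, x')"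
    then show "\<forall>(u, u')\<in>T. 0 \<le> u' (u - x) - x' (u - x)"
      using key by auto
  next
    assume "\<forall>(u, u')\<in>T. 0 \<le> u' (u - x) - x' (u - x)"
    then show "\<forall>p\<in>T. fitz_term p (x, x') \<le> cpl (x, x')"
      using key by auto
  qed
qed

lemma monotone_opD:
  "monotone_op T \<Longrightarrow> (x, f) \<in> T \<Longrightarrow> (y, g) \<in> T \<Longrightarrow> 0 \<le> f (x - y) - g (x - y)"
  unfolding monotone_op_def by fast

lemma fitz_le_cpl_if_monotone:
  assumes "monotone_op T" "T \<subseteq> UNIV \<times> dual \<tau>" "z \<in> T"
  shows "fitz T z \<le> ereal (cpl z)"
proof -
  obtain x x' where z: "z = (x, x')"
    by (cases z)
  then have "x' \<in> dual \<tau>"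
    using assms(2,3) by auto
  moreover have "\<forall>(u, u')\<in>T. 0 \<le> u' (u - x) - x' (u - x)"
    using monotone_opD[OF assms(1) _ assms(3)[unfolded z]] by blast
  ultimately show ?thesis
    using fitz_le_cpl_iff[OF assms(2)] z by blast
qed

lemma convex_Z_fitz:
  assumes "T \<subseteq> UNIV \<times> dual \<tau>"
  shows "convex_Z \<tau> (fitz T)"
  unfolding convex_Z_def
proof (intro ballI allI impI)
  fix z w and r s t :: real
  assume "fitz T z \<le> ereal r \<and> fitz T w \<le> ereal s \<and> 0 \<le> t \<and> t \<le> 1"
  then have zw: "\<forall>p\<in>T. fitz_term p z \<le> r" "\<forall>p\<in>T. fitz_term p w \<le> s" and t: "0 \<le> t" "t \<le> 1"
    unfolding fitz_le_iff by auto
  have "fitz_term p (zcomb t z w) \<le> t * r + (1 - t) * s" if p: "p \<in> T" for p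
  proof -
    have p': "snd p \<in> dual \<tau>"
      using p assms by auto
    then have "fitz_term p (zcomb t z w) = t * fitz_term p z + (1 - t) * fitz_term p w"
      unfolding fitz_term_def zcomb_def
      by (simp add: dual_add[OF p'] dual_diff[OF p'] dual_scale[OF p'] algebra_simps)
    also have "\<dots> \<le> t * r + (1 - t) * s"
      using zw p t by (intro add_mono mult_left_mono) auto
    finally show ?thesis .
  qed
  then show "fitz T (zcomb t z w) \<le> ereal (t * r + (1 - t) * s)"
    unfolding fitz_le_iff by blast
qed

lemma continuous_map_fitz_term:
  assumes "snd p \<in> dual \<tau>"
  shows "continuous_map (Ztop \<tau>) euclideanreal (fitz_term p)"
proof -
  have "continuous_map (Ztop \<tau>) euclideanreal (\<lambda>z. snd p (fst z))"
    using continuous_map_compose[OF continuous_map_fst dual_continuous_map[OF assms]]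
    unfolding Ztop_def o_def .
  moreover have "continuous_map (Ztop \<tau>) euclideanreal (\<lambda>z. snd z (fst p))"
    using continuous_map_compose[OF continuous_map_snd continuous_map_weak_star_eval]
    unfolding Ztop_def o_def .
  ultimately show ?thesis
    unfolding fitz_term_def[abs_def] by (intro continuous_map_diff continuous_map_add) auto
qed

lemma lsc_Z_fitz:
  assumes "T \<subseteq> UNIV \<times> dual \<tau>"
  shows "lsc_Z \<tau> (fitz T)"
  unfolding lsc_Z_def
proof
  fix r
  define C where "C p = {z \<in> topspace (Ztop \<tau>). fitz_term p z \<in> {..r}}" for p
  have "closedin (Ztop \<tau>) (C p)" if "p \<in> T" for p
  proof -
    have "snd p \<in> dual \<tau>"
      using that assms by auto
    then show ?thesis
      unfolding C_def by (rule closedin_continuous_map_preimage[OF continuous_map_fitz_term])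
        (simp add: closed_closedin[symmetric])
  qed
  then have "closedin (Ztop \<tau>) (\<Inter> (insert (topspace (Ztop \<tau>)) (C ` T)))"
    by (intro closedin_Inter) auto
  moreover have "\<Inter> (insert (topspace (Ztop \<tau>)) (C ` T))
      = {z \<in> topspace (Ztop \<tau>). fitz T z \<le> ereal r}"
    unfolding C_def fitz_le_iff by auto
  ultimately show "closedin (Ztop \<tau>) {z \<in> topspace (Ztop \<tau>). fitz T z \<le> ereal r}"
    by simp
qed

lemma restr_UNIV [simp]: "restr T UNIV = T"
  unfolding restr_def by simp

lemma V_NI_if_identifies:
  assumes "identifies \<tau> V T"
  shows "V_NI \<tau> V T"
  unfolding V_NI_def
proof
  fix z assume z: "z \<in> V \<times> dual \<tau>"
  show "ereal (cpl z) \<le> fitz (restr T V) z"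
  proof (rule ccontr)
    assume less: "\<not> ereal (cpl z) \<le> fitz (restr T V) z"
    then have "z \<in> T"
      using assms z unfolding identifies_def by auto
    then have "z \<in> restr T V"
      using z unfolding restr_def by auto
    then show False
      using cpl_le_fitz less by blast
  qed
qed

lemma proper_Z_fitz:
  assumes "T \<subseteq> UNIV \<times> dual \<tau>" "monotone_op T" "T \<noteq> {}"
    and above: "\<forall>z\<in>Zset \<tau>. ereal (cpl z) \<le> fitz T z"
  shows "proper_Z \<tau> (fitz T)"
  unfolding proper_Z_def
proof
  show "\<forall>z\<in>Zset \<tau>. fitz T z \<noteq> - \<infinity>"
    using above by (metis MInfty_neq_ereal(1) ereal_infty_less_eq(2))
  obtain z where z: "z \<in> T"
    using assms(3) by blast
  then have "fitz T z \<noteq> \<infinity>"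
    using fitz_le_cpl_if_monotone[OF assms(2,1) z] by auto
  moreover have "z \<in> Zset \<tau>"
    using z assms(1) unfolding Zset_def by blast
  ultimately show "\<exists>z\<in>Zset \<tau>. fitz T z \<noteq> \<infinity>"
    by blast
qed

lemma representable_if_identifies_UNIV:
  assumes T: "T \<subseteq> UNIV \<times> dual \<tau>" "T \<in> M_ops \<tau>" and ident: "identifies \<tau> UNIV T"
  shows "representable \<tau> T"
  unfolding representable_def
proof (intro exI[of _ "fitz T"] conjI)
  have mono: "monotone_op T" and "T \<noteq> {}"
    using T(2) unfolding M_ops_def by auto
  have above: "\<forall>z\<in>Zset \<tau>. ereal (cpl z) \<le> fitz T z"
    using V_NI_if_identifies[OF ident] unfolding V_NI_def Zset_def by simp
  have below: "fitz T z \<le> ereal (cpl z)" if "z \<in> T" for z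
    by (rule fitz_le_cpl_if_monotone[OF mono T(1) that])
  show "\<forall>z\<in>Zset \<tau>. ereal (cpl z) \<le> fitz T z"
    by (fact above)
  show "proper_Z \<tau> (fitz T)"
    by (rule proper_Z_fitz[OF T(1) mono \<open>T \<noteq> {}\<close> above])
  show "convex_Z \<tau> (fitz T)"
    by (rule convex_Z_fitz[OF T(1)])
  show "lsc_Z \<tau> (fitz T)"
    by (rule lsc_Z_fitz[OF T(1)])
  show "{z \<in> Zset \<tau>. fitz T z = ereal (cpl z)} = T"
  proof
    show "{z \<in> Zset \<tau>. fitz T z = ereal (cpl z)} \<subseteq> T"
      using ident unfolding identifies_def Zset_def by auto
    show "T \<subseteq> {z \<in> Zset \<tau>. fitz T z = ereal (cpl z)}"
    proof
      fix z assume z: "z \<in> T"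
      then have "z \<in> Zset \<tau>"
        using T(1) unfolding Zset_def by blast
      then show "z \<in> {z \<in> Zset \<tau>. fitz T z = ereal (cpl z)}"
        using below[OF z] above by (auto intro: antisym)
    qed
  qed
qed

lemma convex_ZD:
  assumes "convex_Z \<tau> h" "z \<in> Zset \<tau>" "w \<in> Zset \<tau>" "h z \<le> ereal r" "h w \<le> ereal s" "0 \<le> t" "t \<le> 1"
  shows "h (zcomb t z w) \<le> ereal (t * r + (1 - t) * s)"
  using assms unfolding convex_Z_def by blast

lemma zcomb_in_Zset: "z \<in> Zset \<tau> \<Longrightarrow> w \<in> Zset \<tau> \<Longrightarrow> zcomb t z w \<in> Zset \<tau>"
  unfolding zcomb_def Zset_def by (auto intro: dual_lincomb)

lemma monotone_op_if_representable:
  assumes "representable \<tau> T"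
  shows "monotone_op T"
proof -
  obtain h where h: "convex_Z \<tau> h" "\<forall>z\<in>Zset \<tau>. ereal (cpl z) \<le> h z"
    "{z \<in> Zset \<tau>. h z = ereal (cpl z)} = T"
    using assms unfolding representable_def by blast
  have "0 \<le> f (x - y) - g (x - y)" if xf: "(x, f) \<in> T" and yg: "(y, g) \<in> T" for x f y g
  proof -
    have Z: "(x, f) \<in> Zset \<tau>" "(y, g) \<in> Zset \<tau>"
      and hT: "h (x, f) = ereal (f x)" "h (y, g) = ereal (g y)"
      using xf yg h(3) unfolding cpl_def by auto
    then have f: "f \<in> dual \<tau>" and g: "g \<in> dual \<tau>"
      unfolding Zset_def by auto
    define m where "m = zcomb (1 / 2) (x, f) (y, g)"
    have "ereal (cpl m) \<le> h m"
      using h(2) zcomb_in_Zset[OF Z] unfolding m_def by blast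
    also have "h m \<le> ereal ((1 / 2) * f x + (1 - 1 / 2) * g y)"
      unfolding m_def by (rule convex_ZD[OF h(1) Z]) (simp_all add: hT)
    finally have "cpl m \<le> (f x + g y) / 2"
      by simp
    moreover have "cpl m = (f x + f y + g x + g y) / 4"
      unfolding m_def cpl_def zcomb_def by (simp add: dual_add[OF f] dual_add[OF g]
          dual_scale[OF f] dual_scale[OF g] field_simps)
    ultimately show ?thesis
      by (simp add: dual_diff[OF f] dual_diff[OF g])
  qed
  then show ?thesis
    unfolding monotone_op_def by blast
qed

lemma nonempty_if_V_NI_UNIV:
  fixes \<tau> :: "'a::real_vector topology"
  assumes "V_NI \<tau> UNIV T"
  shows "T \<noteq> {}"
proof
  assume "T = {}"
  have "(0, \<lambda>x. 0) \<in> UNIV \<times> dual \<tau>"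
    using zero_in_dual by simp
  then have "ereal (cpl (0::'a, \<lambda>x. 0)) \<le> fitz (restr T UNIV) (0, \<lambda>x. 0)"
    using assms unfolding V_NI_def by blast
  then show False
    using \<open>T = {}\<close> unfolding fitz_def cpl_def by (simp add: bot_ereal_def)
qed

section \<open>Separation from the epigraph of a lower semicontinuous convex function\<close>

lemma small_step_less:
  fixes a b c :: real
  assumes "a < b"
  shows "\<exists>e>0. \<forall>t. 0 \<le> t \<and> t \<le> e \<longrightarrow> a + t * c < b"
proof (intro exI[of _ "(b - a) / (2 * (\<bar>c\<bar> + 1))"] conjI allI impI)
  show "(b - a) / (2 * (\<bar>c\<bar> + 1)) > 0"
    using assms by simp
  fix t assume t: "0 \<le> t \<and> t \<le> (b - a) / (2 * (\<bar>c\<bar> + 1))"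
  then have "t * (2 * (\<bar>c\<bar> + 1)) \<le> b - a"
    by (simp add: pos_le_divide_eq)
  moreover have "t * c \<le> t * \<bar>c\<bar>"
    using t by (simp add: mult_left_mono)
  ultimately show "a + t * c < b"
    using assms t by (simp add: algebra_simps)
qed

lemma nonneg_if_bounded_on_halfline:
  fixes a b r \<alpha> :: real
  assumes "\<And>s. s < r \<Longrightarrow> a + \<alpha> * s < b"
  shows "0 \<le> \<alpha>"
proof (rule ccontr)
  assume "\<not> 0 \<le> \<alpha>"
  define s where "s = min (r - 1) ((b - a) / \<alpha>)"
  have "b - a \<le> \<alpha> * s"
    using \<open>\<not> 0 \<le> \<alpha>\<close> mult_left_mono_neg[of s "(b - a) / \<alpha>" \<alpha>] unfolding s_def by simp
  moreover have "a + \<alpha> * s < b"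
    using assms[of s] unfolding s_def by simp
  ultimately show False
    by simp
qed

lemma linear_Pair_fst:
  assumes "linear F"
  shows "linear (\<lambda>x. F (x, 0))"
proof (rule linearI)
  show "F (x + y, 0) = F (x, 0) + F (y, 0)" for x y
    using linear_add[OF assms, of "(x, 0)" "(y, 0)"] by simp
  show "F (c *\<^sub>R x, 0) = c *\<^sub>R F (x, 0)" for c x
    using linear_scale[OF assms, of c "(x, 0)"] by simp
qed

lemma linear_Pair_snd:
  assumes "linear F"
  shows "linear (\<lambda>y. F (0, y))"
proof (rule linearI)
  show "F (0, x + y) = F (0, x) + F (0, y)" for x y
    using linear_add[OF assms, of "(0, x)" "(0, y)"] by simp
  show "F (0, c *\<^sub>R x) = c *\<^sub>R F (0, x)" for c x
    using linear_scale[OF assms, of c "(0, x)"] by simp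
qed

lemma linear_triple_eq:
  fixes F :: "'a::real_vector \<times> 'b::real_vector \<times> real \<Rightarrow> real"
  assumes "linear F"
  shows "F (y, v, s) = F (y, 0, 0) + F (0, v, 0) + s * F (0, 0, 1)"
proof -
  have "F (y, v, s) = F ((y, 0, 0) + (0, v, 0) + s *\<^sub>R (0, 0, 1))"
    by simp
  then show ?thesis
    by (simp only: linear_add[OF assms] linear_scale[OF assms]) simp
qed

lemma lookup_scaleR_poly_mapping:
  "Poly_Mapping.lookup (c *\<^sub>R v) k = c * Poly_Mapping.lookup (v :: 'a \<Rightarrow>\<^sub>0 real) k"
proof -
  have "finite {i. c *\<^sub>R Poly_Mapping.lookup v i \<noteq> 0}"
    by (rule finite_subset[OF _ finite_lookup[of v]]) auto
  then show ?thesis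
    unfolding scaleR_poly_mapping_def by simp
qed

text \<open>The weak-star topology only sees the values of a functional at finitely many points;
  \<open>coords K f\<close> records those values as a vector of a real vector space.\<close>
definition coords :: "'a set \<Rightarrow> ('a \<Rightarrow> real) \<Rightarrow> 'a \<Rightarrow>\<^sub>0 real" where
  "coords K f = Abs_poly_mapping (\<lambda>k. if k \<in> K then f k else 0)"

lemma lookup_coords: "finite K \<Longrightarrow> Poly_Mapping.lookup (coords K f) k = (if k \<in> K then f k else 0)"
proof -
  assume "finite K"
  then have "finite {k. (if k \<in> K then f k else 0) \<noteq> 0}"
    by (rule finite_subset[rotated]) auto
  then show ?thesis
    unfolding coords_def by simp
qed

lemma coords_lincomb:
  "finite K \<Longrightarrow> coords K (\<lambda>x. a * f x + b * g x) = a *\<^sub>R coords K f + b *\<^sub>R coords K g"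
  by (rule poly_mapping_eqI) (simp add: lookup_coords lookup_add lookup_scaleR_poly_mapping)

lemma linear_apply_coords:
  assumes K: "finite K" and l: "linear l" and f: "linear f"
  shows "l (coords K f) = f (\<Sum>k\<in>K. l (Poly_Mapping.single k 1) *\<^sub>R k)"
proof -
  have "coords K f = (\<Sum>k\<in>K. f k *\<^sub>R Poly_Mapping.single k 1)"
  proof (rule poly_mapping_eqI)
    fix i
    have "Poly_Mapping.lookup (\<Sum>k\<in>K. f k *\<^sub>R Poly_Mapping.single k (1::real)) i
        = (\<Sum>k\<in>K. f k * (1 when k = i))"
      by (simp add: lookup_sum lookup_scaleR_poly_mapping lookup_single)
    also have "\<dots> = (\<Sum>k\<in>K. if k = i then f k else 0)"
      by (rule sum.cong) auto
    finally show "Poly_Mapping.lookup (coords K f) i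
        = Poly_Mapping.lookup (\<Sum>k\<in>K. f k *\<^sub>R Poly_Mapping.single k 1) i"
      using K by (simp add: lookup_coords sum.delta')
  qed
  then have "l (coords K f) = (\<Sum>k\<in>K. f k * l (Poly_Mapping.single k 1))"
    by (simp add: linear_sum[OF l] linear_scale[OF l])
  also have "\<dots> = f (\<Sum>k\<in>K. l (Poly_Mapping.single k 1) *\<^sub>R k)"
    by (simp add: linear_sum[OF f] linear_scale[OF f] mult.commute)
  finally show ?thesis .
qed

definition lower_box :: "'a set \<Rightarrow> 'a set \<Rightarrow> ('a \<Rightarrow> real) \<Rightarrow> real \<Rightarrow> real
    \<Rightarrow> ('a \<times> ('a \<Rightarrow>\<^sub>0 real) \<times> real) set" where
  "lower_box U K f0 \<epsilon> r = {(y, v, s). y \<in> U \<and> (\<Sum>k\<in>K. \<bar>Poly_Mapping.lookup v k - f0 k\<bar>) < \<epsilon> \<and> s < r}"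

lemma convex_lower_box:
  assumes "convex U"
  shows "convex (lower_box U K f0 \<epsilon> r)"
proof (rule convexI)
  fix a b and u w :: real
  assume ab: "a \<in> lower_box U K f0 \<epsilon> r" "b \<in> lower_box U K f0 \<epsilon> r"
    and uw: "0 \<le> u" "0 \<le> w" "u + w = 1"
  obtain y1 v1 s1 y2 v2 s2 where ab_eq: "a = (y1, v1, s1)" "b = (y2, v2, s2)"
    by (cases a, cases b) auto
  have 1: "y1 \<in> U" "(\<Sum>k\<in>K. \<bar>Poly_Mapping.lookup v1 k - f0 k\<bar>) < \<epsilon>" "s1 < r"
    and 2: "y2 \<in> U" "(\<Sum>k\<in>K. \<bar>Poly_Mapping.lookup v2 k - f0 k\<bar>) < \<epsilon>" "s2 < r"
    using ab unfolding ab_eq lower_box_def by auto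
  have "(\<Sum>k\<in>K. \<bar>Poly_Mapping.lookup (u *\<^sub>R v1 + w *\<^sub>R v2) k - f0 k\<bar>)
      \<le> (\<Sum>k\<in>K. u * \<bar>Poly_Mapping.lookup v1 k - f0 k\<bar> + w * \<bar>Poly_Mapping.lookup v2 k - f0 k\<bar>)"
  proof (rule sum_mono)
    fix k
    have "Poly_Mapping.lookup (u *\<^sub>R v1 + w *\<^sub>R v2) k - f0 k
        = u * (Poly_Mapping.lookup v1 k - f0 k) + w * (Poly_Mapping.lookup v2 k - f0 k)"
      using uw(3)
      by (simp add: lookup_add lookup_scaleR_poly_mapping algebra_simps flip: distrib_right)
    then show "\<bar>Poly_Mapping.lookup (u *\<^sub>R v1 + w *\<^sub>R v2) k - f0 k\<bar>
        \<le> u * \<bar>Poly_Mapping.lookup v1 k - f0 k\<bar> + w * \<bar>Poly_Mapping.lookup v2 k - f0 k\<bar>"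
      using uw abs_triangle_ineq[of "u * (Poly_Mapping.lookup v1 k - f0 k)"
          "w * (Poly_Mapping.lookup v2 k - f0 k)"]
      by (simp add: abs_mult)
  qed
  also have "\<dots> < \<epsilon>"
    using convex_bound_lt[OF 1(2) 2(2) uw] by (simp add: sum.distrib sum_distrib_left)
  finally show "u *\<^sub>R a + w *\<^sub>R b \<in> lower_box U K f0 \<epsilon> r"
    using convexD[OF assms 1(1) 2(1) uw] convex_bound_lt[OF 1(3) 2(3) uw]
    unfolding ab_eq lower_box_def by simp
qed

lemma alg_open_lower_box:
  fixes U :: "'a::real_vector set"
  assumes "alg_open U"
  shows "alg_open (lower_box U K f0 \<epsilon> r)"
  unfolding alg_open_iff
proof (intro ballI allI)
  fix a and d :: "'a \<times> ('a \<Rightarrow>\<^sub>0 real) \<times> real"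
  assume "a \<in> lower_box U K f0 \<epsilon> r"
  then obtain y v s where a: "a = (y, v, s)" "y \<in> U"
      "(\<Sum>k\<in>K. \<bar>Poly_Mapping.lookup v k - f0 k\<bar>) < \<epsilon>" "s < r"
    unfolding lower_box_def by blast
  obtain dy dv ds where d: "d = (dy, dv, ds)"
    by (cases d) auto
  obtain e1 where e1: "e1 > 0" "\<And>t. 0 \<le> t \<Longrightarrow> t \<le> e1 \<Longrightarrow> y + t *\<^sub>R dy \<in> U"
    using alg_openD[OF assms a(2)] by metis
  obtain e2 where e2: "e2 > 0" "\<And>t. 0 \<le> t \<and> t \<le> e2 \<Longrightarrow>
      (\<Sum>k\<in>K. \<bar>Poly_Mapping.lookup v k - f0 k\<bar>) + t * (\<Sum>k\<in>K. \<bar>Poly_Mapping.lookup dv k\<bar>) < \<epsilon>"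
    using small_step_less[OF a(3)] by blast
  obtain e3 where e3: "e3 > 0" "\<And>t. 0 \<le> t \<and> t \<le> e3 \<Longrightarrow> s + t * ds < r"
    using small_step_less[OF a(4)] by blast
  have "a + t *\<^sub>R d \<in> lower_box U K f0 \<epsilon> r" if t: "0 \<le> t" "t \<le> min e1 (min e2 e3)" for t
  proof -
    have "(\<Sum>k\<in>K. \<bar>Poly_Mapping.lookup (v + t *\<^sub>R dv) k - f0 k\<bar>)
        \<le> (\<Sum>k\<in>K. \<bar>Poly_Mapping.lookup v k - f0 k\<bar> + t * \<bar>Poly_Mapping.lookup dv k\<bar>)"
    proof (rule sum_mono)
      fix k
      show "\<bar>Poly_Mapping.lookup (v + t *\<^sub>R dv) k - f0 k\<bar>
          \<le> \<bar>Poly_Mapping.lookup v k - f0 k\<bar> + t * \<bar>Poly_Mapping.lookup dv k\<bar>"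
        using abs_triangle_ineq[of "Poly_Mapping.lookup v k - f0 k" "t * Poly_Mapping.lookup dv k"]
          t(1)
        by (simp add: lookup_add lookup_scaleR_poly_mapping abs_mult algebra_simps)
    qed
    also have "\<dots> = (\<Sum>k\<in>K. \<bar>Poly_Mapping.lookup v k - f0 k\<bar>)
        + t * (\<Sum>k\<in>K. \<bar>Poly_Mapping.lookup dv k\<bar>)"
      by (simp add: sum.distrib sum_distrib_left)
    finally show ?thesis
      using a d e1(2) e2(2) e3(2) t unfolding lower_box_def by fastforce
  qed
  then show "\<exists>e>0. \<forall>t. 0 \<le> t \<and> t \<le> e \<longrightarrow> a + t *\<^sub>R d \<in> lower_box U K f0 \<epsilon> r"
    using e1(1) e2(1) e3(1) by (intro exI[of _ "min e1 (min e2 e3)"]) auto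
qed

lemma coords_mem_lower_box_iff:
  assumes "finite K"
  shows "(y, coords K f, s) \<in> lower_box U K f0 \<epsilon> r \<longleftrightarrow>
    y \<in> U \<and> (\<Sum>k\<in>K. \<bar>f k - f0 k\<bar>) < \<epsilon> \<and> s < r"
proof -
  have "(\<Sum>k\<in>K. \<bar>Poly_Mapping.lookup (coords K f) k - f0 k\<bar>) = (\<Sum>k\<in>K. \<bar>f k - f0 k\<bar>)"
    by (rule sum.cong) (simp_all add: lookup_coords[OF assms])
  then show ?thesis
    unfolding lower_box_def by simp
qed

definition shifted_epigraph :: "'a::real_vector topology \<Rightarrow> ('a \<times> ('a \<Rightarrow> real) \<Rightarrow> ereal) \<Rightarrow> 'a
    \<Rightarrow> 'a set \<Rightarrow> ('a \<times> ('a \<Rightarrow>\<^sub>0 real) \<times> real) set" where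
  "shifted_epigraph \<tau> h x0 K = {(y, coords K f, s) | y f s. f \<in> dual \<tau> \<and> h (x0 + y, f) \<le> ereal s}"

lemma convex_shifted_epigraph:
  assumes K: "finite K" and h: "convex_Z \<tau> h"
  shows "convex (shifted_epigraph \<tau> h x0 K)"
proof (rule convexI)
  fix a b and u w :: real
  assume ab: "a \<in> shifted_epigraph \<tau> h x0 K" "b \<in> shifted_epigraph \<tau> h x0 K"
    and uw: "0 \<le> u" "0 \<le> w" "u + w = 1"
  obtain y1 f1 s1 where a: "a = (y1, coords K f1, s1)" "f1 \<in> dual \<tau>" "h (x0 + y1, f1) \<le> ereal s1"
    using ab(1) unfolding shifted_epigraph_def by blast
  obtain y2 f2 s2 where b: "b = (y2, coords K f2, s2)" "f2 \<in> dual \<tau>" "h (x0 + y2, f2) \<le> ereal s2"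
    using ab(2) unfolding shifted_epigraph_def by blast
  define f where "f = (\<lambda>x. u * f1 x + w * f2 x)"
  have w: "w = 1 - u"
    using uw(3) by simp
  have "zcomb u (x0 + y1, f1) (x0 + y2, f2) = (x0 + (u *\<^sub>R y1 + w *\<^sub>R y2), f)"
    unfolding zcomb_def f_def w by (simp add: algebra_simps)
  moreover have "h (zcomb u (x0 + y1, f1) (x0 + y2, f2)) \<le> ereal (u * s1 + (1 - u) * s2)"
    using a b uw by (intro convex_ZD[OF h]) (auto simp: Zset_def)
  ultimately have "h (x0 + (u *\<^sub>R y1 + w *\<^sub>R y2), f) \<le> ereal (u * s1 + w * s2)"
    by (simp add: w)
  moreover have "f \<in> dual \<tau>"
    unfolding f_def using a(2) b(2) by (rule dual_lincomb)
  moreover have "u *\<^sub>R a + w *\<^sub>R b = (u *\<^sub>R y1 + w *\<^sub>R y2, coords K f, u * s1 + w * s2)"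
    unfolding a b f_def by (simp add: coords_lincomb[OF K])
  ultimately show "u *\<^sub>R a + w *\<^sub>R b \<in> shifted_epigraph \<tau> h x0 K"
    unfolding shifted_epigraph_def by blast
qed

lemma lsc_Z_above_nbhd:
  assumes \<tau>: "hlcs \<tau>" and h: "lsc_Z \<tau> h" and f0: "f0 \<in> dual \<tau>" and r: "ereal r < h (x0, f0)"
  obtains U K \<epsilon> where "openin \<tau> U" "convex U" "0 \<in> U" "finite K" "\<epsilon> > 0"
    "\<And>y f. y \<in> U \<Longrightarrow> f \<in> dual \<tau> \<Longrightarrow> (\<Sum>k\<in>K. \<bar>f k - f0 k\<bar>) < \<epsilon> \<Longrightarrow> ereal r < h (x0 + y, f)"
proof -
  define S where "S = topspace (Ztop \<tau>) - {z \<in> topspace (Ztop \<tau>). h z \<le> ereal r}"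
  have "closedin (Ztop \<tau>) {z \<in> topspace (Ztop \<tau>). h z \<le> ereal r}"
    using h unfolding lsc_Z_def by blast
  then have S: "openin (prod_topology \<tau> (weak_star \<tau>)) S"
    unfolding S_def Ztop_def by (rule openin_diff[OF openin_topspace])
  have z0: "(x0, f0) \<in> S"
    unfolding S_def using topspace_Ztop[OF \<tau>] f0 r by auto
  obtain U1 W1 where UW: "openin \<tau> U1" "openin (weak_star \<tau>) W1" "x0 \<in> U1" "f0 \<in> W1"
    "U1 \<times> W1 \<subseteq> S"
    using S[unfolded openin_prod_topology_alt, rule_format, OF z0] by blast
  obtain K \<epsilon> where K: "finite K" "\<epsilon> > 0" "\<forall>f\<in>dual \<tau>. (\<Sum>k\<in>K. \<bar>f k - f0 k\<bar>) < \<epsilon> \<longrightarrow> f \<in> W1"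
    using weak_star_nbhd[OF UW(2,4)] by blast
  have "openin \<tau> {y. 1 *\<^sub>R y + x0 \<in> U1}" "0 \<in> {y. 1 *\<^sub>R y + x0 \<in> U1}"
    using hlcs_openin_affine_preimage[OF \<tau> UW(1), of 1 x0] UW(3) by auto
  then obtain U where U: "openin \<tau> U" "convex U" "0 \<in> U" "U \<subseteq> {y. 1 *\<^sub>R y + x0 \<in> U1}"
    using \<tau> unfolding hlcs_def by meson
  have "ereal r < h (x0 + y, f)"
    if "y \<in> U" "f \<in> dual \<tau>" "(\<Sum>k\<in>K. \<bar>f k - f0 k\<bar>) < \<epsilon>" for y f
  proof -
    have "x0 + y \<in> U1" "f \<in> W1"
      using that U(4) K(3) by (auto simp: add.commute)
    then have "(x0 + y, f) \<in> S"
      using UW(5) by blast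
    then show ?thesis
      unfolding S_def by auto
  qed
  then show thesis
    using that U(1-3) K(1,2) by blast
qed

lemma shifted_epigraph_nonempty:
  assumes "proper_Z \<tau> h"
  shows "shifted_epigraph \<tau> h x0 K \<noteq> {}"
proof -
  obtain x f where z: "f \<in> dual \<tau>" "h (x, f) \<noteq> \<infinity>" "h (x, f) \<noteq> - \<infinity>"
    using assms unfolding proper_Z_def Zset_def by fast
  then obtain s where "h (x0 + (x - x0), f) = ereal s"
    by (cases "h (x, f)") auto
  then have "(x - x0, coords K f, s) \<in> shifted_epigraph \<tau> h x0 K"
    unfolding shifted_epigraph_def using z(1) by fastforce
  then show ?thesis by blast
qed

lemma lower_box_shifted_epigraph_disjoint:
  assumes K: "finite K"
    and above: "\<And>y f. y \<in> U \<Longrightarrow> f \<in> dual \<tau> \<Longrightarrow> (\<Sum>k\<in>K. \<bar>f k - f0 k\<bar>) < \<epsilon> \<Longrightarrow>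
      ereal r < h (x0 + y, f)"
  shows "lower_box U K f0 \<epsilon> r \<inter> shifted_epigraph \<tau> h x0 K = {}"
proof -
  have "\<not> h (x0 + y, f) \<le> ereal s"
    if "(y, coords K f, s) \<in> lower_box U K f0 \<epsilon> r" "f \<in> dual \<tau>" for y f s
  proof
    assume "h (x0 + y, f) \<le> ereal s"
    moreover have "ereal r < h (x0 + y, f)" "s < r"
      using that above coords_mem_lower_box_iff[OF K] by auto
    ultimately show False
      using less_le_trans[of "ereal r" "h (x0 + y, f)" "ereal s"] by simp
  qed
  then show ?thesis
    unfolding shifted_epigraph_def by blast
qed

lemma lsc_convex_separating_functional:
  fixes \<tau> :: "'a::real_vector topology"
  assumes \<tau>: "hlcs \<tau>" and h: "proper_Z \<tau> h" "convex_Z \<tau> h" "lsc_Z \<tau> h"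
    and f0: "f0 \<in> dual \<tau>" and r: "ereal r < h (x0, f0)"
  obtains U K \<epsilon> and F :: "'a \<times> ('a \<Rightarrow>\<^sub>0 real) \<times> real \<Rightarrow> real"
  where "openin \<tau> U" "0 \<in> U" "finite K" "\<epsilon> > 0" "linear F" "shifted_epigraph \<tau> h x0 K \<noteq> {}"
    "\<And>a d. a \<in> lower_box U K f0 \<epsilon> r \<Longrightarrow> d \<in> shifted_epigraph \<tau> h x0 K \<Longrightarrow> F a < F d"
    "\<And>a. a \<in> lower_box U K f0 \<epsilon> r \<Longrightarrow> \<exists>a'\<in>lower_box U K f0 \<epsilon> r. F a < F a'"
proof -
  obtain U K \<epsilon> where U: "openin \<tau> U" "convex U" "0 \<in> U" "finite K" "\<epsilon> > 0"
    and above: "\<And>y f. y \<in> U \<Longrightarrow> f \<in> dual \<tau> \<Longrightarrow> (\<Sum>k\<in>K. \<bar>f k - f0 k\<bar>) < \<epsilon> \<Longrightarrow>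
      ereal r < h (x0 + y, f)"
    using lsc_Z_above_nbhd[OF \<tau> h(3) f0 r] by blast
  have A: "lower_box U K f0 \<epsilon> r \<noteq> {}"
    using coords_mem_lower_box_iff[OF U(4), of 0 f0 "r - 1" U f0 \<epsilon> r] U(3,5) by auto
  have D: "shifted_epigraph \<tau> h x0 K \<noteq> {}"
    by (rule shifted_epigraph_nonempty[OF h(1)])
  have disjoint: "lower_box U K f0 \<epsilon> r \<inter> shifted_epigraph \<tau> h x0 K = {}"
    using above by (intro lower_box_shifted_epigraph_disjoint[where h = h, OF U(4)])
  obtain F :: "'a \<times> ('a \<Rightarrow>\<^sub>0 real) \<times> real \<Rightarrow> real" where
    "linear F" "\<forall>a\<in>lower_box U K f0 \<epsilon> r. \<forall>d\<in>shifted_epigraph \<tau> h x0 K. F a < F d"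
    "\<forall>a\<in>lower_box U K f0 \<epsilon> r. \<exists>a'\<in>lower_box U K f0 \<epsilon> r. F a < F a'"
    using separation_alg_open[OF convex_lower_box[OF U(2)] convex_shifted_epigraph[OF U(4) h(2)]
        A D disjoint alg_open_lower_box[OF hlcs_openin_imp_alg_open[OF \<tau> U(1)]]]
    by blast
  then show thesis
    using that U(1,3-5) D by blast
qed

lemma linear_coords_decompose:
  fixes F :: "'a::real_vector \<times> ('a \<Rightarrow>\<^sub>0 real) \<times> real \<Rightarrow> real"
  assumes F: "linear F" and K: "finite K"
  obtains g y \<alpha> where "linear g" "\<And>x f s. linear f \<Longrightarrow> F (x, coords K f, s) = g x + f y + \<alpha> * s"
proof -
  define g where "g x = F (x, 0, 0)" for x
  define l where "l v = F (0, v, 0)" for v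
  have "linear g"
    using linear_Pair_fst[OF F] unfolding g_def by (simp add: zero_prod_def)
  have "linear l"
    using linear_Pair_fst[OF linear_Pair_snd[OF F]] unfolding l_def by simp
  have "F (x, coords K f, s) = g x + f (\<Sum>k\<in>K. l (Poly_Mapping.single k 1) *\<^sub>R k) + F (0, 0, 1) * s"
    if "linear f" for x f s
    using linear_triple_eq[OF F, of x "coords K f" s] linear_apply_coords[OF K \<open>linear l\<close> that]
    unfolding g_def l_def by (simp add: mult.commute)
  then show thesis
    using that \<open>linear g\<close> by blast
qed

text \<open>Continuous linear functionals on \<open>X \<times> X\<^sup>*\<close> with the weak-star topology on the second
  factor have the form \<open>(x, f) \<mapsto> g x + f y\<close>, which is the shape of the separating hyperplane.\<close>
theorem lsc_convex_strict_separation: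
  fixes \<tau> :: "'a::real_vector topology"
  assumes \<tau>: "hlcs \<tau>" and h: "proper_Z \<tau> h" "convex_Z \<tau> h" "lsc_Z \<tau> h"
    and f0: "f0 \<in> dual \<tau>" and r: "ereal r < h (x0, f0)"
  shows "\<exists>g\<in>dual \<tau>. \<exists>y \<alpha> B. 0 \<le> \<alpha> \<and> 0 < B \<and> (\<forall>x. \<forall>f\<in>dual \<tau>. \<forall>s.
           h (x, f) \<le> ereal s \<longrightarrow> g x0 + f0 y + \<alpha> * r + B \<le> g x + f y + \<alpha> * s)"
proof -
  obtain r' where r': "r < r'" "ereal r' < h (x0, f0)"
    using ereal_dense2[OF r] by (metis ereal_less(2) ereal_dense2 less_ereal.simps(1))
  obtain U K \<epsilon> and F :: "'a \<times> ('a \<Rightarrow>\<^sub>0 real) \<times> real \<Rightarrow> real"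
    where U: "openin \<tau> U" "0 \<in> U" and K: "finite K" "\<epsilon> > 0"
    and F: "linear F" "shifted_epigraph \<tau> h x0 K \<noteq> {}"
    and sep: "\<And>a d. a \<in> lower_box U K f0 \<epsilon> r' \<Longrightarrow> d \<in> shifted_epigraph \<tau> h x0 K \<Longrightarrow> F a < F d"
    and nomax: "\<And>a. a \<in> lower_box U K f0 \<epsilon> r' \<Longrightarrow> \<exists>a'\<in>lower_box U K f0 \<epsilon> r'. F a < F a'"
    using lsc_convex_separating_functional[OF \<tau> h f0 r'(2)] by blast
  have box: "(y, coords K f0, s) \<in> lower_box U K f0 \<epsilon> r'" if "y \<in> U" "s < r'" for y s
    using that K by (simp add: coords_mem_lower_box_iff)
  obtain g y \<alpha> where g: "linear g"
    and F_eq: "\<And>x f s. f \<in> dual \<tau> \<Longrightarrow> F (x, coords K f, s) = g x + f y + \<alpha> * s"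
    using linear_coords_decompose[OF F(1) K(1)] dual_linear by metis
  have below: "F a < g (x - x0) + f y + \<alpha> * s"
    if "a \<in> lower_box U K f0 \<epsilon> r'" "f \<in> dual \<tau>" "h (x, f) \<le> ereal s" for a x f s
  proof -
    have "(x - x0, coords K f, s) \<in> shifted_epigraph \<tau> h x0 K"
      unfolding shifted_epigraph_def using that(2,3) by fastforce
    from sep[OF that(1) this] show ?thesis
      using F_eq[OF that(2)] by simp
  qed
  obtain d0 where d0: "d0 \<in> shifted_epigraph \<tau> h x0 K"
    using F(2) by blast
  have "0 \<le> \<alpha>"
  proof (rule nonneg_if_bounded_on_halfline)
    show "f0 y + \<alpha> * s < F d0" if "s < r'" for s
      using sep[OF box[OF U(2) that] d0] F_eq[OF f0] linear_0[OF g] by simp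
  qed
  have "g \<in> dual \<tau>"
  proof -
    have "g u \<le> F d0 - f0 y - \<alpha> * (r' - 1)" if "u \<in> U" for u
      using sep[OF box[OF that, of "r' - 1"] d0] F_eq[OF f0] by simp
    then show ?thesis
      unfolding dual_def using linear_bounded_above_continuous[OF \<tau> g U] g by blast
  qed
  obtain a1 where a1: "a1 \<in> lower_box U K f0 \<epsilon> r'" "F (0, coords K f0, r) < F a1"
    using nomax[OF box[OF U(2) r'(1)]] by blast
  define B where "B = F a1 - F (0, coords K f0, r)"
  have "g x0 + f0 y + \<alpha> * r + B \<le> g x + f y + \<alpha> * s"
    if "f \<in> dual \<tau>" "h (x, f) \<le> ereal s" for x f s
    using below[OF a1(1) that] F_eq[OF f0] linear_0[OF g] linear_diff[OF g]
    unfolding B_def by simp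
  moreover have "0 < B"
    using a1(2) unfolding B_def by simp
  ultimately show ?thesis
    using \<open>g \<in> dual \<tau>\<close> \<open>0 \<le> \<alpha>\<close> by blast
qed

section \<open>Identification and the NI property\<close>

lemma cpl_minus_fitz_term_shift:
  assumes u': "u' \<in> dual \<tau>" and f0: "f0 \<in> dual \<tau>" and g: "g \<in> dual \<tau>"
  shows "cpl (x0 + l *\<^sub>R y, \<lambda>x. f0 x + l * g x)
      - fitz_term (u, u') (x0 + l *\<^sub>R y, \<lambda>x. f0 x + l * g x)
    = (u' (u - x0) - f0 (u - x0)) - l * (g (u - x0) + u' y - f0 y) + l * l * g y"
  using cpl_minus_fitz_term[OF u' dual_lincomb[OF f0 g, of 1 l], where x = "x0 + l *\<^sub>R y" and u = u]
  by (simp add: dual_diff[OF u'] dual_diff[OF f0] dual_diff[OF g] dual_add[OF u'] dual_add[OF f0]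
      dual_add[OF g] dual_scale[OF u'] dual_scale[OF f0] dual_scale[OF g] algebra_simps)

text \<open>Moving \<open>(x0, f0)\<close> a little in the direction \<open>(y, g)\<close> produces a point of
  \<open>V \<times> X\<^sup>*\<close> at which \<open>fitz (restr T V)\<close> lies strictly below the coupling.\<close>
lemma not_V_NI_if_gap_bound:
  fixes \<tau> :: "'a::real_vector topology"
  assumes T: "T \<subseteq> UNIV \<times> dual \<tau>" and V: "alg_open V" "x0 \<in> V"
    and f0: "f0 \<in> dual \<tau>" and g: "g \<in> dual \<tau>" and B: "0 < B" and c: "0 < c"
    and gap: "\<And>u u'. (u, u') \<in> restr T V \<Longrightarrow> 0 \<le> u' (u - x0) - f0 (u - x0)"
    and bound: "\<And>u u'. (u, u') \<in> restr T V \<Longrightarrow>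
      g (u - x0) + u' y - f0 y + B \<le> c * (u' (u - x0) - f0 (u - x0))"
  shows "\<not> V_NI \<tau> V T"
proof
  assume NI: "V_NI \<tau> V T"
  obtain e where e: "e > 0" "\<And>t. 0 \<le> t \<Longrightarrow> t \<le> e \<Longrightarrow> x0 + t *\<^sub>R y \<in> V"
    using alg_openD[OF V] by metis
  obtain e' where e': "e' > 0" "\<And>t. 0 \<le> t \<and> t \<le> e' \<Longrightarrow> 0 + t * (- g y) < B"
    using small_step_less[OF B] by blast
  define l where "l = min (min e (1 / c)) e'"
  have l: "0 < l" "l \<le> e" "l \<le> 1 / c" "l \<le> e'"
    unfolding l_def using e(1) e'(1) c by auto
  then have lc: "l * c \<le> 1" and lB: "0 < B + l * g y"
    using c e'(2)[of l] by (simp_all add: pos_le_divide_eq mult.commute)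
  define d where "d = l * (B + l * g y)"
  have "0 < d"
    unfolding d_def using l(1) lB by simp
  define w where "w = (x0 + l *\<^sub>R y, \<lambda>x. f0 x + l * g x)"
  have w: "fst w \<in> V" "snd w \<in> dual \<tau>"
    unfolding w_def using e(2) l dual_lincomb[OF f0 g, of 1 l] by auto
  have "fitz_term p w \<le> cpl w - d" if p: "p \<in> restr T V" for p
  proof -
    obtain u u' where pu: "p = (u, u')" by (cases p)
    then have u': "u' \<in> dual \<tau>"
      using p T unfolding restr_def by auto
    define m where "m = u' (u - x0) - f0 (u - x0)"
    have "l * (g (u - x0) + u' y - f0 y) \<le> l * (c * m - B)"
      using bound[OF p[unfolded pu]] l(1) unfolding m_def by simp
    moreover have "0 \<le> (1 - l * c) * m"
      using gap[OF p[unfolded pu]] lc unfolding m_def by simp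
    ultimately show ?thesis
      using cpl_minus_fitz_term_shift[OF u' f0 g, of x0 l y u] unfolding w_def pu d_def m_def
      by (simp add: algebra_simps)
  qed
  then have "fitz (restr T V) w \<le> ereal (cpl w - d)"
    unfolding fitz_le_iff by blast
  have "ereal (cpl w) \<le> fitz (restr T V) w"
    using NI w unfolding V_NI_def by (cases w) auto
  also have "\<dots> \<le> ereal (cpl w - d)"
    by fact
  finally show False
    using \<open>0 < d\<close> by simp
qed

text \<open>The vertical slope \<open>\<alpha>\<close> of the separating hyperplane is absorbed into the coefficient
  \<open>1 + \<alpha>\<close> of the gap, which is possible because the gap is nonnegative.\<close>
lemma identifies_if_representable_V_NI:
  fixes \<tau> :: "'a::real_vector topology"
  assumes \<tau>: "hlcs \<tau>" and V: "alg_open V" and R: "representable \<tau> T" and NI: "V_NI \<tau> V T"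
  shows "identifies \<tau> V T"
  unfolding identifies_def
proof clarify
  fix x0 f0 assume x0: "x0 \<in> V" and f0: "f0 \<in> dual \<tau>"
    and below: "fitz (restr T V) (x0, f0) \<le> ereal (cpl (x0, f0))"
  obtain h where h: "proper_Z \<tau> h" "convex_Z \<tau> h" "lsc_Z \<tau> h" "\<forall>z\<in>Zset \<tau>. ereal (cpl z) \<le> h z"
    and T: "{z \<in> Zset \<tau>. h z = ereal (cpl z)} = T"
    using R unfolding representable_def by blast
  have TZ: "T \<subseteq> UNIV \<times> dual \<tau>" and TV: "restr T V \<subseteq> UNIV \<times> dual \<tau>"
    using T unfolding Zset_def restr_def by auto
  have gap: "0 \<le> u' (u - x0) - f0 (u - x0)" if "(u, u') \<in> restr T V" for u u'
    using below fitz_le_cpl_iff[OF TV f0] that by auto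
  show "(x0, f0) \<in> T"
  proof (rule ccontr)
    assume "(x0, f0) \<notin> T"
    then have above: "ereal (f0 x0) < h (x0, f0)"
      using h(4) T f0 unfolding Zset_def cpl_def by (auto simp: order_less_le)
    obtain g y \<alpha> B where g: "g \<in> dual \<tau>" and \<alpha>: "0 \<le> \<alpha>" and B: "0 < B"
      and sep: "\<And>x f s. f \<in> dual \<tau> \<Longrightarrow> h (x, f) \<le> ereal s \<Longrightarrow>
        g x0 + f0 y + \<alpha> * f0 x0 + B \<le> g x + f y + \<alpha> * s"
      using lsc_convex_strict_separation[OF \<tau> h(1-3) f0 above] by blast
    define g' where "g' x = (- 1) * g x + (- \<alpha>) * f0 x" for x
    define y' where "y' = - (y + \<alpha> *\<^sub>R x0)"
    have "g' (u - x0) + u' y' - f0 y' + B \<le> (1 + \<alpha>) * (u' (u - x0) - f0 (u - x0))"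
      if p: "(u, u') \<in> restr T V" for u u'
    proof -
      have u': "u' \<in> dual \<tau>" and "h (u, u') = ereal (u' u)"
        using p T unfolding restr_def Zset_def cpl_def by auto
      then have "g x0 + f0 y + \<alpha> * f0 x0 + B \<le> g u + u' y + \<alpha> * u' u"
        using sep by simp
      then show ?thesis
        using gap[OF p] \<alpha> unfolding g'_def y'_def
        by (simp add: dual_diff[OF u'] dual_diff[OF f0] dual_diff[OF g] dual_add[OF u']
            dual_add[OF f0] dual_scale[OF u'] dual_scale[OF f0] dual_minus[OF u'] dual_minus[OF f0]
            algebra_simps)
    qed
    moreover have "g' \<in> dual \<tau>"
      unfolding g'_def using g f0 by (rule dual_lincomb)
    ultimately have "\<not> V_NI \<tau> V T"
      using gap B \<alpha>
      by (intro not_V_NI_if_gap_bound[where y = y' and c = "1 + \<alpha>", OF TZ V x0 f0]) auto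
    then show False
      using NI by blast
  qed
qed

theorem theorem3p3:
  fixes \<tau> :: "'a::real_vector topology"
    and T :: "('a \<times> ('a \<Rightarrow> real)) set"
    and \<V> :: "'a set set"
  assumes "hlcs \<tau>"
    and "T \<subseteq> UNIV \<times> dual \<tau>"
    and "\<forall>V\<in>\<V>. alg_open V"
    and "UNIV \<in> \<V>"
  shows "(T \<in> M_ops \<tau> \<and> (\<forall>V\<in>\<V>. identifies \<tau> V T))
     \<longleftrightarrow> (representable \<tau> T \<and> (\<forall>V\<in>\<V>. V_NI \<tau> V T))"
proof
  assume "T \<in> M_ops \<tau> \<and> (\<forall>V\<in>\<V>. identifies \<tau> V T)"
  then show "representable \<tau> T \<and> (\<forall>V\<in>\<V>. V_NI \<tau> V T)"
    using representable_if_identifies_UNIV[OF assms(2)] V_NI_if_identifies assms(4) by blast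
next
  assume R: "representable \<tau> T \<and> (\<forall>V\<in>\<V>. V_NI \<tau> V T)"
  then have "T \<in> M_ops \<tau>"
    unfolding M_ops_def Zset_def
    using assms(2,4) monotone_op_if_representable nonempty_if_V_NI_UNIV by blast
  moreover have "\<forall>V\<in>\<V>. identifies \<tau> V T"
    using identifies_if_representable_V_NI[OF assms(1)] assms(3) R by blast
  ultimately show "T \<in> M_ops \<tau> \<and> (\<forall>V\<in>\<V>. identifies \<tau> V T)"
    by blast
qed

end
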